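(* For every pair of integers $r$ and $k$ with $r\ge 2$, $k$ positive, $r+k\equiv 0\pmod 2$ and $k\le r$, there exist infinitely many triples $(G,P,d)$ such that (1) $G$ is a graph with $\chi(G)\le r$, (2) $P\subset V(G)$ and $|\mathcal{D}_G(P,2)|=2(r+k-1)$, (3) $d\colon P\to[r+k]$ is a precoloring of $P$ in $G$, and (4) $d$ cannot be extended to a $\frac{3r+k}{2}$-coloring of $G$.
   Context: For a graph $G$, $P\subset V(G)$ and a positive integer $k$, $\mathcal{D}_G(P,k)=\{\{x,y\}\subset P: x\ne y,\ d_G(x,y)\le k\}$, where $d_G$ is the distance in $G$. $[m]=\{1,\dots,m\}$. A precoloring of $P$ in $G$ is a proper coloring of $G[P]$; an $m$-coloring of $G$ is a proper coloring using at most $m$ colors; $d$ is extended by a coloring $f$ of $G$ if $f(v)=d(v)$ for all $v\in P$. *)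

theory Defs
  imports Main
begin

definition graph :: "nat set \<Rightarrow> nat set set \<Rightarrow> bool" where
  "graph V E \<longleftrightarrow> finite V \<and> (\<forall>e\<in>E. e \<subseteq> V \<and> card e = 2)"

definition adj :: "nat set set \<Rightarrow> nat \<Rightarrow> nat \<Rightarrow> bool" where
  "adj E x y \<longleftrightarrow> x \<noteq> y \<and> {x, y} \<in> E"

fun walk :: "nat set set \<Rightarrow> nat list \<Rightarrow> bool" where
  "walk E [] = True"
| "walk E [x] = True"
| "walk E (x # y # xs) = (adj E x y \<and> walk E (y # xs))"

definition dist_le :: "nat set set \<Rightarrow> nat \<Rightarrow> nat \<Rightarrow> nat \<Rightarrow> bool" where
  "dist_le E x y k \<longleftrightarrow>
     (\<exists>ps. walk E ps \<and> ps \<noteq> [] \<and> hd ps = x \<and> last ps = y \<and> length ps \<le> k + 1)"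

definition close_pairs :: "nat set set \<Rightarrow> nat set \<Rightarrow> nat \<Rightarrow> nat set set" where
  "close_pairs E P k = {{x, y} | x y. x \<in> P \<and> y \<in> P \<and> x \<noteq> y \<and> dist_le E x y k}"

definition proper_coloring_on :: "nat set set \<Rightarrow> nat set \<Rightarrow> (nat \<Rightarrow> nat) \<Rightarrow> nat \<Rightarrow> bool" where
  "proper_coloring_on E S f m \<longleftrightarrow>
     (\<forall>v\<in>S. f v \<in> {1..m}) \<and> (\<forall>x\<in>S. \<forall>y\<in>S. adj E x y \<longrightarrow> f x \<noteq> f y)"

definition chromatic_number :: "nat set \<Rightarrow> nat set set \<Rightarrow> nat" where
  "chromatic_number V E = (LEAST m. \<exists>f. proper_coloring_on E V f m)"

end

(*
  Let m = r + k - 1 and M = (3r + k)/2. Take a complete r-partite graph with parts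
  {x_ij | j < m} (i < r), precoloured vertices y_j, z_j (j < m) of colour j + 1 and two hubs
  y, z of colour m + 1; for i < r - 1 the vertex x_ij is joined to y_j and y, for i = r - 1 to
  z_j and z. The precoloured vertices are independent, and the pairs among them at distance 2
  are exactly {y_j, y} and {z_j, z}, 2m in all. Colouring part i by i + 1, the y's by r and the
  z's by 1 shows that the graph is r-colourable.
  In an extension x_ij avoids the colours j + 1 and m + 1, and distinct parts get disjoint
  palettes. A part whose palette lies in [m] uses at least two colours (if x_i0 gets c, then
  x_i(c-1) cannot), otherwise it uses a colour above m + 1. Counting gives
  2r <= m + 2(M - m - 1), i.e. 2M >= 3r + k + 1, which is false. Isolated padding vertices
  make the examples arbitrarily large.
*)

theory Submission
  imports Defs "HOL-Library.Countable"
begin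

lemma dist_le_2_iff:
  assumes "x \<noteq> y"
  shows "dist_le E x y 2 \<longleftrightarrow> adj E x y \<or> (\<exists>z. adj E x z \<and> adj E z y)"
proof
  assume "dist_le E x y 2"
  then obtain ps where ps: "walk E ps" "ps \<noteq> []" "hd ps = x" "last ps = y" "length ps \<le> 3"
    unfolding dist_le_def by auto
  then show "adj E x y \<or> (\<exists>z. adj E x z \<and> adj E z y)"
  proof (cases ps rule: remdups_adj.cases)
    case 1
    with ps show ?thesis by simp
  next
    case (2 a)
    with ps assms show ?thesis by simp
  next
    case (3 a b cs)
    with ps show ?thesis by (cases cs) auto
  qed
next
  assume "adj E x y \<or> (\<exists>z. adj E x z \<and> adj E z y)"
  then show "dist_le E x y 2"
  proof
    assume "adj E x y"
    then show ?thesis unfolding dist_le_def by (intro exI[of _ "[x, y]"]) simp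
  next
    assume "\<exists>z. adj E x z \<and> adj E z y"
    then obtain z where "adj E x z" "adj E z y" by blast
    then show ?thesis unfolding dist_le_def by (intro exI[of _ "[x, z, y]"]) simp
  qed
qed

lemma close_pairs_2_of_independent:
  assumes "\<forall>x\<in>P. \<forall>y\<in>P. \<not> adj E x y"
  shows "close_pairs E P 2 = {{x, y} | x y. x \<in> P \<and> y \<in> P \<and> x \<noteq> y \<and> (\<exists>z. adj E x z \<and> adj E z y)}"
  unfolding close_pairs_def using assms by (simp add: dist_le_2_iff cong: conj_cong)

lemma chromatic_number_le:
  "proper_coloring_on E V f m \<Longrightarrow> chromatic_number V E \<le> m"
  unfolding chromatic_number_def by (rule Least_le) blast

definition encode_edges :: "('a::countable \<Rightarrow> 'a \<Rightarrow> bool) \<Rightarrow> nat set set" where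
  "encode_edges R = {{to_nat a, to_nat b} | a b. R a b}"

context
  fixes R :: "'a::countable \<Rightarrow> 'a \<Rightarrow> bool"
  assumes sym: "symp R" and irrefl: "irreflp R"
begin

lemma adj_encode_edges_iff:
  "adj (encode_edges R) x y \<longleftrightarrow> (\<exists>a b. x = to_nat a \<and> y = to_nat b \<and> R a b)"
  using sym irrefl unfolding adj_def encode_edges_def
  by (auto simp: doubleton_eq_iff symp_def irreflp_def)

lemma adj_encode_edges [simp]:
  "adj (encode_edges R) (to_nat a) (to_nat b) \<longleftrightarrow> R a b"
  by (simp add: adj_encode_edges_iff)

lemma graph_encode_edges:
  assumes "finite V" and "\<And>a b. R a b \<Longrightarrow> a \<in> V"
  shows "graph (to_nat ` V) (encode_edges R)"
proof -
  have "a \<in> V" "b \<in> V" "a \<noteq> b" if "R a b" for a b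
    using that assms(2) sym irrefl by (auto dest: sympD irreflpD)
  then show ?thesis
    using assms(1) unfolding graph_def encode_edges_def by auto
qed

lemma proper_coloring_on_encode_edges:
  "proper_coloring_on (encode_edges R) (to_nat ` S) f c \<longleftrightarrow>
     (\<forall>a\<in>S. f (to_nat a) \<in> {1..c}) \<and> (\<forall>a\<in>S. \<forall>b\<in>S. R a b \<longrightarrow> f (to_nat a) \<noteq> f (to_nat b))"
  unfolding proper_coloring_on_def by auto

lemma close_pairs_encode_edges:
  assumes "\<forall>a\<in>S. \<forall>b\<in>S. \<not> R a b"
  shows "close_pairs (encode_edges R) (to_nat ` S) 2 =
           image to_nat ` {{a, b} | a b. a \<in> S \<and> b \<in> S \<and> a \<noteq> b \<and> (\<exists>c. R a c \<and> R c b)}"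
proof -
  have two_paths: "(\<exists>z. adj (encode_edges R) (to_nat a) z \<and> adj (encode_edges R) z (to_nat b))
                     \<longleftrightarrow> (\<exists>c. R a c \<and> R c b)" for a b
    by (auto simp: adj_encode_edges_iff)
  have "\<forall>x\<in>to_nat ` S. \<forall>y\<in>to_nat ` S. \<not> adj (encode_edges R) x y"
    using assms by auto
  then have "close_pairs (encode_edges R) (to_nat ` S) 2 =
     {{to_nat a, to_nat b} | a b. a \<in> S \<and> b \<in> S \<and> a \<noteq> b \<and> (\<exists>c. R a c \<and> R c b)}"
    by (subst close_pairs_2_of_independent) (auto simp flip: two_paths, fastforce)
  then show ?thesis by (auto intro!: image_eqI[where x = "{_, _}"])
qed

end

lemma card_image_ge_2_if_avoids_successor:
  fixes g :: "nat \<Rightarrow> nat"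
  assumes "0 < m" and "g ` {..<m} \<subseteq> {1..m}" and "\<forall>j<m. g j \<noteq> j + 1"
  shows "2 \<le> card (g ` {..<m})"
proof -
  define j where "j = g 0 - 1"
  have "g 0 \<in> {2..m}" using assms by (force simp: image_subset_iff)
  then have "j < m" and "j + 1 = g 0" by (auto simp: j_def)
  then have "g j \<noteq> g 0" using assms(3) by metis
  then have "{g 0, g j} \<subseteq> g ` {..<m}" using assms(1) \<open>j < m\<close> by auto
  moreover have "card {g 0, g j} = 2" using \<open>g j \<noteq> g 0\<close> by simp
  ultimately show ?thesis by (metis card_mono finite_imageI finite_lessThan)
qed

lemma grid_coloring_colors_lower_bound:
  fixes g :: "nat \<Rightarrow> nat \<Rightarrow> nat"
  assumes "0 < m" and "m < M"
    and range: "\<And>i j. i < r \<Longrightarrow> j < m \<Longrightarrow> g i j \<in> {1..M} - {j + 1, m + 1}"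
    and rows_disjoint: "\<And>i i' j j'. i < r \<Longrightarrow> i' < r \<Longrightarrow> j < m \<Longrightarrow> j' < m \<Longrightarrow> i \<noteq> i' \<Longrightarrow> g i j \<noteq> g i' j'"
  shows "2 * r + m + 2 \<le> 2 * M"
proof -
  define L where "L i = g i ` {..<m} \<inter> {1..m}" for i
  define H where "H i = g i ` {..<m} \<inter> {m+2..M}" for i
  have row: "2 \<le> card (L i) + 2 * card (H i)" if "i < r" for i
  proof (cases "H i = {}")
    case True
    then have "g i ` {..<m} \<subseteq> {1..m}"
      using range[OF that] by (fastforce simp: H_def)
    moreover have "\<forall>j<m. g i j \<noteq> j + 1"
      using range[OF that] by blast
    ultimately have "2 \<le> card (L i)"
      using card_image_ge_2_if_avoids_successor[OF assms(1)] by (simp add: L_def inf.absorb1)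
    then show ?thesis by simp
  next
    case False
    then have "1 \<le> card (H i)" by (simp add: H_def Suc_le_eq card_gt_0_iff)
    then show ?thesis by linarith
  qed
  have "2 * r \<le> (\<Sum>i<r. card (L i) + 2 * card (H i))"
    using sum_mono[of "{..<r}" "\<lambda>_. 2" "\<lambda>i. card (L i) + 2 * card (H i)"] row by simp
  also have "\<dots> = (\<Sum>i<r. card (L i)) + 2 * (\<Sum>i<r. card (H i))"
    by (simp add: sum.distrib sum_distrib_left)
  also have "(\<Sum>i<r. card (L i)) = card (\<Union>i<r. L i)"
    by (rule card_UN_disjoint[symmetric]) (auto simp: L_def dest: rows_disjoint)
  also have "(\<Sum>i<r. card (H i)) = card (\<Union>i<r. H i)"
    by (rule card_UN_disjoint[symmetric]) (auto simp: H_def dest: rows_disjoint)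
  also have "card (\<Union>i<r. L i) + 2 * card (\<Union>i<r. H i) \<le> card {1..m} + 2 * card {m+2..M}"
    by (intro add_mono mult_le_mono2 card_mono) (auto simp: L_def H_def)
  finally show ?thesis using assms(2) by simp
qed

datatype vertex = X nat nat | Y nat | Z nat | HubY | HubZ | Pad nat

instance vertex :: countable by countable_datatype

fun gadget_arc :: "nat \<Rightarrow> nat \<Rightarrow> vertex \<Rightarrow> vertex \<Rightarrow> bool" where
  "gadget_arc r m (X i j) (X i' j') \<longleftrightarrow> i < r \<and> i' < r \<and> j < m \<and> j' < m \<and> i \<noteq> i'"
| "gadget_arc r m (X i j) (Y j') \<longleftrightarrow> i + 1 < r \<and> j < m \<and> j' = j"
| "gadget_arc r m (X i j) HubY \<longleftrightarrow> i + 1 < r \<and> j < m"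
| "gadget_arc r m (X i j) (Z j') \<longleftrightarrow> i + 1 = r \<and> j < m \<and> j' = j"
| "gadget_arc r m (X i j) HubZ \<longleftrightarrow> i + 1 = r \<and> j < m"
| "gadget_arc r m _ _ \<longleftrightarrow> False"

definition gadget_edge :: "nat \<Rightarrow> nat \<Rightarrow> vertex \<Rightarrow> vertex \<Rightarrow> bool" where
  "gadget_edge r m a b \<longleftrightarrow> gadget_arc r m a b \<or> gadget_arc r m b a"

definition precolored :: "nat \<Rightarrow> vertex set" where
  "precolored m = Y ` {..<m} \<union> Z ` {..<m} \<union> {HubY, HubZ}"

definition gadget_vertices :: "nat \<Rightarrow> nat \<Rightarrow> nat \<Rightarrow> vertex set" where
  "gadget_vertices r m n = {X i j | i j. i < r \<and> j < m} \<union> precolored m \<union> Pad ` {..<n}"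

fun precoloring :: "nat \<Rightarrow> vertex \<Rightarrow> nat" where
  "precoloring m (Y j) = j + 1"
| "precoloring m (Z j) = j + 1"
| "precoloring m HubY = m + 1"
| "precoloring m HubZ = m + 1"
| "precoloring m _ = 1"

fun base_coloring :: "nat \<Rightarrow> vertex \<Rightarrow> nat" where
  "base_coloring r (X i j) = i + 1"
| "base_coloring r (Y j) = r"
| "base_coloring r HubY = r"
| "base_coloring r _ = 1"

lemma symp_gadget_edge: "symp (gadget_edge r m)"
  by (auto simp: symp_def gadget_edge_def)

lemma irreflp_gadget_edge: "irreflp (gadget_edge r m)"
proof
  fix a show "\<not> gadget_edge r m a a" by (cases a) (simp_all add: gadget_edge_def)
qed

lemma gadget_edge_in_vertices: "gadget_edge r m a b \<Longrightarrow> a \<in> gadget_vertices r m n"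
  by (cases a; cases b) (auto simp: gadget_edge_def gadget_vertices_def precolored_def)

lemma precolored_independent:
  "a \<in> precolored m \<Longrightarrow> b \<in> precolored m \<Longrightarrow> \<not> gadget_edge r m a b"
  by (auto simp: precolored_def gadget_edge_def)

lemma gadget_common_neighbour:
  assumes "a \<in> precolored m" "b \<in> precolored m" "gadget_edge r m a c" "gadget_edge r m c b"
  shows "\<exists>j<m. {a, b} \<subseteq> {Y j, HubY} \<or> {a, b} \<subseteq> {Z j, HubZ}"
  using assms by (cases c) (auto simp: precolored_def gadget_edge_def)

lemma gadget_two_paths:
  assumes "2 \<le> r"
  shows "{{a, b} | a b. a \<in> precolored m \<and> b \<in> precolored m \<and> a \<noteq> b \<and>
                        (\<exists>c. gadget_edge r m a c \<and> gadget_edge r m c b)}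
           = (\<lambda>j. {Y j, HubY}) ` {..<m} \<union> (\<lambda>j. {Z j, HubZ}) ` {..<m}"
    (is "?pairs = ?star_Y \<union> ?star_Z")
proof (intro equalityI subsetI)
  fix e assume "e \<in> ?pairs"
  then obtain a b c where e: "e = {a, b}" "a \<noteq> b"
    and "a \<in> precolored m" "b \<in> precolored m" "gadget_edge r m a c" "gadget_edge r m c b"
    by blast
  then obtain j where "j < m" "{a, b} \<subseteq> {Y j, HubY} \<or> {a, b} \<subseteq> {Z j, HubZ}"
    using gadget_common_neighbour by blast
  moreover from this(2) have "e = {Y j, HubY} \<or> e = {Z j, HubZ}"
    using e by auto
  ultimately show "e \<in> ?star_Y \<union> ?star_Z" by blast
next
  fix e assume "e \<in> ?star_Y \<union> ?star_Z"
  then consider j where "j < m" "e = {Y j, HubY}" | j where "j < m" "e = {Z j, HubZ}"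
    by blast
  then show "e \<in> ?pairs"
  proof cases
    case 1
    then have "gadget_edge r m (Y j) (X 0 j) \<and> gadget_edge r m (X 0 j) HubY"
      using assms by (simp add: gadget_edge_def)
    with 1 show ?thesis by (auto simp: precolored_def)
  next
    case 2
    then have "gadget_edge r m (Z j) (X (r - 1) j) \<and> gadget_edge r m (X (r - 1) j) HubZ"
      using assms by (simp add: gadget_edge_def)
    with 2 show ?thesis by (auto simp: precolored_def)
  qed
qed

lemma card_close_pairs_precolored:
  assumes "2 \<le> r"
  shows "card (close_pairs (encode_edges (gadget_edge r m)) (to_nat ` precolored m) 2) = 2 * m"
proof -
  have "card (close_pairs (encode_edges (gadget_edge r m)) (to_nat ` precolored m) 2)
          = card ((\<lambda>j. {Y j, HubY}) ` {..<m} \<union> (\<lambda>j. {Z j, HubZ}) ` {..<m})"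
    using precolored_independent
    by (simp add: close_pairs_encode_edges[OF symp_gadget_edge irreflp_gadget_edge]
        gadget_two_paths[OF assms] card_image inj_on_image)
  also have "\<dots> = 2 * m"
    by (subst card_Un_disjoint) (auto simp: card_image inj_on_def doubleton_eq_iff)
  finally show ?thesis .
qed

lemma chromatic_number_gadget_le:
  assumes "2 \<le> r"
  shows "chromatic_number (to_nat ` gadget_vertices r m n) (encode_edges (gadget_edge r m)) \<le> r"
proof (rule chromatic_number_le)
  show "proper_coloring_on (encode_edges (gadget_edge r m)) (to_nat ` gadget_vertices r m n)
          (base_coloring r \<circ> from_nat) r"
    unfolding proper_coloring_on_encode_edges[OF symp_gadget_edge irreflp_gadget_edge]
  proof (intro conjI ballI impI)
    fix a assume "a \<in> gadget_vertices r m n"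
    with assms show "(base_coloring r \<circ> from_nat) (to_nat a) \<in> {1..r}"
      by (auto simp: gadget_vertices_def precolored_def)
  next
    fix a b assume "gadget_edge r m a b"
    with assms
    show "(base_coloring r \<circ> from_nat) (to_nat a) \<noteq> (base_coloring r \<circ> from_nat) (to_nat b)"
      by (cases a; cases b) (auto simp: gadget_edge_def)
  qed
qed

lemma precoloring_proper:
  "proper_coloring_on (encode_edges (gadget_edge r m)) (to_nat ` precolored m)
     (precoloring m \<circ> from_nat) (m + 1)"
  unfolding proper_coloring_on_encode_edges[OF symp_gadget_edge irreflp_gadget_edge]
  using precolored_independent by (auto simp: precolored_def)

lemma X_adjacent_to_precolored:
  assumes "i < r" "j < m"
  shows "\<exists>u\<in>precolored m. \<exists>v\<in>precolored m.
           gadget_edge r m (X i j) u \<and> gadget_edge r m (X i j) v \<and>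
           precoloring m u = j + 1 \<and> precoloring m v = m + 1"
proof (cases "i + 1 < r")
  case True
  with assms show ?thesis
    by (intro bexI[of _ "Y j"] bexI[of _ HubY]) (auto simp: gadget_edge_def precolored_def)
next
  case False
  with assms show ?thesis
    by (intro bexI[of _ "Z j"] bexI[of _ HubZ]) (auto simp: gadget_edge_def precolored_def)
qed

lemma extension_colors_lower_bound:
  assumes "0 < m" and "m < M"
    and f: "proper_coloring_on (encode_edges (gadget_edge r m)) (to_nat ` gadget_vertices r m n) f M"
    and extends: "\<forall>a\<in>precolored m. f (to_nat a) = precoloring m a"
  shows "2 * r + m + 2 \<le> 2 * M"
proof -
  have colors: "\<forall>a\<in>gadget_vertices r m n. f (to_nat a) \<in> {1..M}"
    and proper: "\<forall>a\<in>gadget_vertices r m n. \<forall>b\<in>gadget_vertices r m n.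
                   gadget_edge r m a b \<longrightarrow> f (to_nat a) \<noteq> f (to_nat b)"
    using f unfolding proper_coloring_on_encode_edges[OF symp_gadget_edge irreflp_gadget_edge]
    by auto
  have X_in: "X i j \<in> gadget_vertices r m n" if "i < r" "j < m" for i j
    using that by (auto simp: gadget_vertices_def)
  have precolored_in: "precolored m \<subseteq> gadget_vertices r m n"
    by (auto simp: gadget_vertices_def)
  show ?thesis
  proof (rule grid_coloring_colors_lower_bound[OF assms(1,2)])
    fix i j assume ij: "i < r" "j < m"
    then obtain u v where "u \<in> precolored m" "v \<in> precolored m"
      and "gadget_edge r m (X i j) u" "gadget_edge r m (X i j) v"
      and "precoloring m u = j + 1" "precoloring m v = m + 1"
      using X_adjacent_to_precolored by blast
    then show "f (to_nat (X i j)) \<in> {1..M} - {j + 1, m + 1}"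
      using colors proper extends X_in[OF ij] precolored_in by fastforce
  next
    fix i i' j j' assume "i < r" "i' < r" "j < m" "j' < m" "i \<noteq> i'"
    then show "f (to_nat (X i j)) \<noteq> f (to_nat (X i' j'))"
      using proper X_in by (simp add: gadget_edge_def)
  qed
qed

lemma finite_gadget_vertices: "finite (gadget_vertices r m n)"
  by (simp add: gadget_vertices_def precolored_def finite_image_set2)

lemma card_gadget_vertices_ge: "n \<le> card (to_nat ` gadget_vertices r m n)"
proof -
  have "card (to_nat ` Pad ` {..<n}) = n"
    by (simp add: card_image inj_on_def)
  moreover have "to_nat ` Pad ` {..<n} \<subseteq> to_nat ` gadget_vertices r m n"
    by (auto simp: gadget_vertices_def)
  ultimately show ?thesis
    using finite_gadget_vertices by (metis card_mono finite_imageI)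
qed

theorem theorem6:
  fixes r k :: nat
  assumes "r \<ge> 2" and "k > 0" and "even (r + k)" and "k \<le> r"
  shows "\<forall>n. \<exists>V E P d.
           graph V E \<and> card V \<ge> n \<and>
           chromatic_number V E \<le> r \<and>
           P \<subseteq> V \<and> card (close_pairs E P 2) = 2 * (r + k - 1) \<and>
           proper_coloring_on E P d (r + k) \<and>
           \<not> (\<exists>f. proper_coloring_on E V f ((3 * r + k) div 2) \<and> (\<forall>v\<in>P. f v = d v))"
proof
  fix n
  define m where "m = r + k - 1"
  define E where "E = encode_edges (gadget_edge r m)"
  obtain s where s: "r + k = 2 * s" using assms(3) by (rule evenE)
  then have M: "(3 * r + k) div 2 = r + s" by simp
  have m: "0 < m" "m < r + s" "2 * (r + s) < 2 * r + m + 2" "m + 1 = r + k"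
    using assms s by (auto simp: m_def)
  show "\<exists>V E P d. graph V E \<and> card V \<ge> n \<and> chromatic_number V E \<le> r \<and>
           P \<subseteq> V \<and> card (close_pairs E P 2) = 2 * (r + k - 1) \<and>
           proper_coloring_on E P d (r + k) \<and>
           \<not> (\<exists>f. proper_coloring_on E V f ((3 * r + k) div 2) \<and> (\<forall>v\<in>P. f v = d v))"
  proof (intro exI conjI)
    show "graph (to_nat ` gadget_vertices r m n) E"
      unfolding E_def using finite_gadget_vertices gadget_edge_in_vertices
      by (rule graph_encode_edges[OF symp_gadget_edge irreflp_gadget_edge])
    show "to_nat ` precolored m \<subseteq> to_nat ` gadget_vertices r m n"
      by (auto simp: gadget_vertices_def)
    show "card (close_pairs E (to_nat ` precolored m) 2) = 2 * (r + k - 1)"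
      unfolding E_def m_def by (rule card_close_pairs_precolored[OF assms(1)])
    show "proper_coloring_on E (to_nat ` precolored m) (precoloring m \<circ> from_nat) (r + k)"
      unfolding E_def m(4)[symmetric] by (rule precoloring_proper)
    show "\<not> (\<exists>f. proper_coloring_on E (to_nat ` gadget_vertices r m n) f ((3 * r + k) div 2) \<and>
                (\<forall>v\<in>to_nat ` precolored m. f v = (precoloring m \<circ> from_nat) v))"
      using extension_colors_lower_bound[OF m(1,2)] m(3) unfolding E_def M by force
  qed (use card_gadget_vertices_ge chromatic_number_gadget_le[OF assms(1)] in \<open>simp_all add: E_def\<close>)
qed

end
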